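(* Let $\Gamma$ be a graph on $v$ vertices with adjacency matrix $A$ and Seidel matrix $S = J - I - 2A$, and suppose the switching class of $\Gamma$ is a regular two-graph, i.e. $S$ has exactly two distinct eigenvalues, written as $-1-2\sigma$ and $-1-2\tau$, with respective multiplicities $m_\sigma$ and $m_\tau$. Suppose $\Gamma$ has $e$ edges. Then the adjacency spectrum of $\Gamma$ (as a multiset) is $\{\rho_1^{(1)}, \rho_2^{(1)}, \sigma^{(m_\sigma - 1)}, \tau^{(m_\tau - 1)}\}$ for some real numbers $\rho_1,\rho_2$ (not necessarily distinct from each other or from $\sigma$ or $\tau$), and the following equations hold: $$m_\sigma + m_\tau = v,\quad m_\sigma\sigma + m_\tau\tau = -v/2,\quad m_\sigma\sigma^2 + m_\tau\tau^2 = v^2/4,$$ $$\rho_1+\rho_2 = \sigma+\tau+v/2 = -2\sigma\tau,\qquad \rho_1^2+\rho_2^2 = \sigma^2+\tau^2+2e - v^2/4.$$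
   Context: Graphs are finite, simple and undirected; $J$ is the all-ones matrix and $I$ the identity matrix of order $v$; the exponent $(m)$ denotes multiplicity. For a graph $\Gamma$ with vertex set $V$ and a partition $\Pi=\{U,W\}$ of $V$ (one part possibly empty), Seidel switching gives the graph $\Gamma^\Pi$ on $V$ in which two distinct vertices are adjacent iff either they are adjacent in $\Gamma$ and lie in the same part, or they are non-adjacent in $\Gamma$ and lie in different parts. The switching class (two-graph) $[\Gamma]$ is the set of all $\Gamma^\Pi$. The two-graph $[\Gamma]$ is called regular if the Seidel matrix $S(\Gamma)=J-I-2A$ has exactly two distinct eigenvalues (this is independent of the chosen graph in the class). *)

theory Defs
  imports "Jordan_Normal_Form.Char_Poly"
begin

(* Simple graph on vertex set {0..<v}: E symmetric and irreflexive. *)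

definition adj_mat :: "nat \<Rightarrow> (nat \<Rightarrow> nat \<Rightarrow> bool) \<Rightarrow> real mat" where
  "adj_mat v E = mat v v (\<lambda>(i,j). if E i j then 1 else 0)"

definition seidel_mat :: "nat \<Rightarrow> (nat \<Rightarrow> nat \<Rightarrow> bool) \<Rightarrow> real mat" where
  "seidel_mat v E = mat v v (\<lambda>(i,j). 1) - 1\<^sub>m v - 2 \<cdot>\<^sub>m adj_mat v E"

definition num_edges :: "nat \<Rightarrow> (nat \<Rightarrow> nat \<Rightarrow> bool) \<Rightarrow> nat" where
  "num_edges v E = card {(i,j). i < j \<and> j < v \<and> E i j}"

definition has_spectrum :: "real mat \<Rightarrow> real multiset \<Rightarrow> bool" where
  "has_spectrum A M \<longleftrightarrow> char_poly A = (\<Prod>x\<in>#M. [:-x, 1:])"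

end

(*
  Put M = A - J/2 = -(S + I)/2. It is real symmetric with eigenvalues \<sigma> and \<tau>, so a Schur
  form of (M - \<sigma>)(M - \<tau>) is strictly upper triangular; being symmetric with trace of its
  square zero, this matrix vanishes. Taking the trace of M and a diagonal entry of
  M\<^sup>2 = (\<sigma> + \<tau>) M - \<sigma>\<tau> gives m\<sigma> \<sigma> + m\<tau> \<tau> = -v/2 and \<sigma> + \<tau> + v/2 = -2\<sigma>\<tau>.
  Now A = M + J/2 is a rank-one update of M, and x - M is inverted by M + (x - \<sigma> - \<tau>) up to the
  factor (x - \<sigma>)(x - \<tau>). The matrix determinant lemma then shows that det (x - A) is
  (x - \<sigma>)^(m\<sigma> - 1) (x - \<tau>)^(m\<tau> - 1) times a monic quadratic whose coefficients depend only on
  v, \<sigma>, \<tau> and the entry sum of M, i.e. the number of edges. Its roots \<rho>1, \<rho>2 are real because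
  A is symmetric.
*)

theory Submission
  imports Defs "Jordan_Normal_Form.Schur_Decomposition" "Jordan_Normal_Form.Jordan_Normal_Form_Uniqueness"
begin

lemma poly_eqI_cofinite:
  fixes p q :: "'a :: {idom, ring_char_0} poly"
  assumes "finite F" and eq: "\<And>x. x \<notin> F \<Longrightarrow> poly p x = poly q x"
  shows "p = q"
proof (rule ccontr)
  assume "p \<noteq> q"
  hence "finite {x. poly (p - q) x = 0}" by (intro poly_roots_finite) simp
  moreover have "- F \<subseteq> {x. poly (p - q) x = 0}" using eq by auto
  ultimately have "finite (F \<union> - F)" using \<open>finite F\<close> finite_subset by blast
  thus False by (simp add: infinite_UNIV_char_0)
qed

lemma prod_list_linear_factors_two_values:
  fixes es :: "'a :: comm_ring_1 list"
  assumes "set es \<subseteq> {a, b}" and "a \<noteq> b"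
  shows "(\<Prod>e\<leftarrow>es. [:-e, 1:]) = [:-a, 1:] ^ count_list es a * [:-b, 1:] ^ count_list es b"
    and "count_list es a + count_list es b = length es"
  using assms by (induction es) (auto simp: algebra_simps)

lemma order_linear_power_mult:
  fixes a b :: "'a :: idom"
  assumes "a \<noteq> b"
  shows "Polynomial.order a ([:-a, 1:] ^ m * [:-b, 1:] ^ k) = m"
proof -
  have "Polynomial.order a ([:-a, 1:] ^ m * [:-b, 1:] ^ k)
      = Polynomial.order a ([:-a, 1:] ^ m) + Polynomial.order a ([:-b, 1:] ^ k)"
    by (rule order_mult) simp
  moreover have "Polynomial.order a ([:-b, 1:] ^ k) = 0" using assms by (intro order_0I) auto
  ultimately show ?thesis by (simp add: order_power_n_n)
qed

lemma linear_factor_powers_eq_prod_list: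
  "[:-a, 1:] ^ k * [:-b, 1:] ^ l = (\<Prod>e\<leftarrow>replicate k a @ replicate l b. [:-e, 1:])"
  by (simp only: map_append prod_list.append map_replicate prod_list_replicate)

section \<open>Spectra of real symmetric matrices\<close>

lemma symmetric_char_poly_root_real:
  fixes M :: "real mat"
  assumes M: "M \<in> carrier_mat n n"
    and sym: "\<And>i j. i < n \<Longrightarrow> j < n \<Longrightarrow> M $$ (i,j) = M $$ (j,i)"
    and root: "poly (map_poly complex_of_real (char_poly M)) z = 0"
  shows "Im z = 0"
proof -
  define Mc where "Mc = map_mat complex_of_real M"
  have Mc: "Mc \<in> carrier_mat n n" using M by (simp add: Mc_def)
  have "char_poly Mc = map_poly complex_of_real (char_poly M)"
    unfolding Mc_def by (rule of_real_hom.char_poly_hom[OF M])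
  with root have "eigenvalue Mc z" using eigenvalue_root_char_poly[OF Mc] by simp
  then obtain x where x: "x \<in> carrier_vec n" "x \<noteq> 0\<^sub>v n" "Mc *\<^sub>v x = z \<cdot>\<^sub>v x"
    unfolding eigenvalue_def eigenvector_def using Mc by auto
  \<comment> \<open>the Hermitian form \<open>x\<^sup>* M x\<close> is real, and equals \<open>z |x|\<^sup>2\<close>\<close>
  define s where "s = (\<Sum>i<n. cnj (x$i) * (\<Sum>j<n. complex_of_real (M$$(i,j)) * x$j))"
  have "(\<Sum>j<n. complex_of_real (M$$(i,j)) * x$j) = z * x$i" if "i < n" for i
    using arg_cong[OF x(3), of "\<lambda>y. y $ i"] x(1) M that
    by (simp add: Mc_def scalar_prod_def atLeast0LessThan)
  hence s_eigen: "s = z * (\<Sum>i<n. cnj (x$i) * x$i)"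
    unfolding s_def by (simp add: sum_distrib_left algebra_simps)
  have "cnj s = (\<Sum>i<n. \<Sum>j<n. x$i * complex_of_real (M$$(i,j)) * cnj (x$j))"
    unfolding s_def by (simp add: sum_distrib_left algebra_simps)
  also have "\<dots> = (\<Sum>j<n. \<Sum>i<n. x$i * complex_of_real (M$$(i,j)) * cnj (x$j))"
    by (rule sum.swap)
  also have "\<dots> = s"
    unfolding s_def using sym by (intro sum.cong refl) (auto simp: sum_distrib_left algebra_simps)
  finally have "Im s = 0" by (simp add: complex_eq_iff)
  define r where "r = (\<Sum>i<n. (cmod (x$i))^2)"
  have r: "(\<Sum>i<n. cnj (x$i) * x$i) = complex_of_real r"
    unfolding r_def of_real_sum
    by (intro sum.cong refl) (simp add: complex_norm_square[symmetric] mult.commute)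
  obtain i where "i < n" "x $ i \<noteq> 0" using x by (metis carrier_vecD eq_vecI index_zero_vec(1,2))
  hence "r > 0" unfolding r_def by (intro sum_pos2[of _ i]) auto
  with \<open>Im s = 0\<close> show ?thesis using s_eigen r by simp
qed

lemma symmetric_char_poly_splits:
  fixes M :: "real mat"
  assumes M: "M \<in> carrier_mat n n"
    and sym: "\<And>i j. i < n \<Longrightarrow> j < n \<Longrightarrow> M $$ (i,j) = M $$ (j,i)"
  obtains es where "char_poly M = (\<Prod>e\<leftarrow>es. [:-e, 1:])" "length es = n"
proof -
  interpret of_real_poly: map_poly_inj_comm_ring_hom complex_of_real ..
  have "char_poly (map_mat complex_of_real M) = map_poly complex_of_real (char_poly M)"
    by (rule of_real_hom.char_poly_hom[OF M])
  moreover obtain as where as: "char_poly (map_mat complex_of_real M) = (\<Prod>a\<leftarrow>as. [:-a, 1:])"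
    "length as = n"
    using char_poly_factorized[of "map_mat complex_of_real M" n] M by auto
  ultimately have cp: "map_poly complex_of_real (char_poly M) = (\<Prod>a\<leftarrow>as. [:-a, 1:])" by simp
  have real: "Im a = 0" if "a \<in> set as" for a
    using that symmetric_char_poly_root_real[OF M sym, of a] cp
    by (simp add: poly_prod_list_zero_iff)
  have "map_poly complex_of_real (\<Prod>e\<leftarrow>map Re as. [:-e, 1:])
      = (\<Prod>a\<leftarrow>as. map_poly complex_of_real [:- Re a, 1:])"
    by (simp add: of_real_poly.hom_prod_list o_def)
  also have "\<dots> = (\<Prod>a\<leftarrow>as. [:-a, 1:])"
    by (rule arg_cong[where f = prod_list], rule map_cong) (use real in \<open>auto simp: complex_eq_iff\<close>)
  finally have "map_poly complex_of_real (\<Prod>e\<leftarrow>map Re as. [:-e, 1:]) = (\<Prod>a\<leftarrow>as. [:-a, 1:])" .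
  hence "char_poly M = (\<Prod>e\<leftarrow>map Re as. [:-e, 1:])"
    using cp by (intro of_real_poly.injectivity) simp
  with as(2) show ?thesis using that[of "map Re as"] by simp
qed

lemma symmetric_two_eigenvalues_char_poly:
  fixes M :: "real mat"
  assumes M: "M \<in> carrier_mat n n"
    and sym: "\<And>i j. i < n \<Longrightarrow> j < n \<Longrightarrow> M $$ (i,j) = M $$ (j,i)"
    and eigs: "{x. eigenvalue M x} = {a, b}" and "a \<noteq> b"
  obtains k l where "char_poly M = [:-a, 1:] ^ Suc k * [:-b, 1:] ^ Suc l" and "Suc k + Suc l = n"
proof -
  obtain es where es: "char_poly M = (\<Prod>e\<leftarrow>es. [:-e, 1:])" "length es = n"
    using symmetric_char_poly_splits[OF M sym] .
  have "eigenvalue M x \<longleftrightarrow> x \<in> set es" for x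
    unfolding eigenvalue_root_char_poly[OF M] es by (simp add: poly_prod_list_zero_iff)
  with eigs have "set es = {a, b}" by blast
  hence "count_list es a \<noteq> 0" "count_list es b \<noteq> 0" by (simp_all add: count_list_0_iff)
  with prod_list_linear_factors_two_values[of es a b] \<open>set es = {a, b}\<close> \<open>a \<noteq> b\<close> es show ?thesis
    by (intro that[of "count_list es a - 1" "count_list es b - 1"]) auto
qed

lemma symmetric_quadratic_factor_splits:
  fixes M :: "real mat"
  assumes M: "M \<in> carrier_mat n n"
    and sym: "\<And>i j. i < n \<Longrightarrow> j < n \<Longrightarrow> M $$ (i,j) = M $$ (j,i)"
    and dvd: "[:c, b, 1:] dvd char_poly M"
  obtains r1 r2 where "[:c, b, 1:] = [:-r1, 1:] * [:-r2, 1:]"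
proof -
  define D where "D = b\<^sup>2 - 4 * c"
  have "D \<ge> 0"
  proof (rule ccontr)
    \<comment> \<open>otherwise the quadratic has a non-real root, which would be an eigenvalue of \<open>M\<close>\<close>
    assume "\<not> D \<ge> 0"
    interpret of_real_poly: map_poly_inj_comm_ring_hom complex_of_real ..
    define z where "z = Complex (- b / 2) (sqrt (- D) / 2)"
    have "poly (map_poly complex_of_real [:c, b, 1:]) z = 0"
      using \<open>\<not> D \<ge> 0\<close> by (simp add: z_def D_def complex_eq_iff power2_eq_square field_simps)
    moreover obtain p where "char_poly M = [:c, b, 1:] * p" using dvd by (elim dvdE)
    ultimately have "poly (map_poly complex_of_real (char_poly M)) z = 0"
      by (simp only: of_real_poly.hom_mult poly_mult mult_eq_0_iff simp_thms)
    hence "Im z = 0" using symmetric_char_poly_root_real[OF M sym] by blast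
    with \<open>\<not> D \<ge> 0\<close> show False by (simp add: z_def)
  qed
  hence "sqrt D ^ 2 = D" by simp
  hence "[:c, b, 1:] = [:- ((- b + sqrt D) / 2), 1:] * [:- ((- b - sqrt D) / 2), 1:]"
    by (simp add: D_def field_simps power2_eq_square)
  thus ?thesis by (rule that)
qed

definition mat_trace :: "'a :: comm_ring_1 mat \<Rightarrow> 'a" where
  "mat_trace M = (\<Sum>i<dim_row M. M $$ (i,i))"

lemma mat_trace_eq_sum_diag_mat: "mat_trace M = sum_list (diag_mat M)"
  by (simp add: mat_trace_def diag_mat_def sum_list_sum_nth atLeast0LessThan)

lemma mat_trace_mult_comm:
  assumes "A \<in> carrier_mat n m" "B \<in> carrier_mat m n"
  shows "mat_trace (A * B) = mat_trace (B * A)"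
proof -
  have "mat_trace (A * B) = (\<Sum>i<n. \<Sum>k<m. A$$(i,k) * B$$(k,i))"
    using assms by (simp add: mat_trace_def scalar_prod_def atLeast0LessThan)
  also have "\<dots> = (\<Sum>k<m. \<Sum>i<n. B$$(k,i) * A$$(i,k))"
    by (subst sum.swap) (simp add: mult.commute)
  also have "\<dots> = mat_trace (B * A)"
    using assms by (simp add: mat_trace_def scalar_prod_def atLeast0LessThan)
  finally show ?thesis .
qed

lemma similar_mat_wit_trace:
  assumes "similar_mat_wit A B P Q"
  shows "mat_trace A = mat_trace B"
proof -
  define n where "n = dim_row A"
  from similar_mat_witD[OF n_def assms] have carrier: "{B, P, Q} \<subseteq> carrier_mat n n"
    and "Q * P = 1\<^sub>m n" "A = P * B * Q" by auto
  hence "mat_trace A = mat_trace (P * B * Q)" by simp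
  also have "\<dots> = mat_trace (Q * (P * B))"
    using carrier by (intro mat_trace_mult_comm[of _ n n]) auto
  also have "Q * (P * B) = B"
    using carrier \<open>Q * P = 1\<^sub>m n\<close> by (auto simp: assoc_mult_mat[of Q n n P n B n, symmetric])
  finally show ?thesis .
qed

lemma similar_mat_wit_mult:
  assumes AB: "similar_mat_wit A B P Q" and CD: "similar_mat_wit C D P Q"
  shows "similar_mat_wit (A * C) (B * D) P Q"
proof -
  define n where "n = dim_row A"
  note AB' = similar_mat_witD[OF n_def AB]
  have "dim_row C = n" using similar_mat_witD(6)[OF refl CD] AB'(6) by auto
  note CD' = similar_mat_witD[OF this[symmetric] CD]
  have cancel: "Q * (P * X) = X" if "X \<in> carrier_mat n n" for X
    using AB' that by (simp add: assoc_mult_mat[of Q n n P n X n, symmetric])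
  have "A * C = P * (B * (Q * (P * (D * Q))))"
    unfolding AB'(3) CD'(3) using AB' CD' by (simp add: assoc_mult_mat[of _ n n _ n _ n])
  also have "\<dots> = P * (B * D) * Q"
    using AB' CD' by (simp add: cancel assoc_mult_mat[of _ n n _ n _ n])
  finally show ?thesis using AB' CD' by (intro similar_mat_witI) auto
qed

lemma upper_triangular_mult:
  assumes U: "U \<in> carrier_mat n n" and V: "V \<in> carrier_mat n n"
    and "upper_triangular U" "upper_triangular V"
  shows "upper_triangular (U * V)"
proof
  fix i j assume "i < dim_row (U * V)" "j < i"
  hence "U $$ (i,k) * V $$ (k,j) = 0" if "k < n" for k
    using assms that by (cases "k < i") (auto simp: upper_triangular_def)
  thus "(U * V) $$ (i,j) = 0"
    using \<open>i < dim_row (U * V)\<close> \<open>j < i\<close> U V by (simp add: scalar_prod_def)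
qed

lemma diag_mult_upper_triangular:
  assumes U: "U \<in> carrier_mat n n" and V: "V \<in> carrier_mat n n"
    and "upper_triangular U" "upper_triangular V" and i: "i < n"
  shows "(U * V) $$ (i,i) = U $$ (i,i) * V $$ (i,i)"
proof -
  have "U $$ (i,k) * V $$ (k,i) = 0" if "k < n" "k \<noteq> i" for k
    using assms that by (cases "k < i") (auto simp: upper_triangular_def)
  hence "(\<Sum>k\<in>{0..<n}. U $$ (i,k) * V $$ (k,i)) = U $$ (i,i) * V $$ (i,i)"
    using i by (subst sum.remove[of _ i]) auto
  thus ?thesis using U V i by (simp add: scalar_prod_def)
qed

lemma upper_triangular_char_matrix:
  assumes "U \<in> carrier_mat n n" "upper_triangular U"
  shows "upper_triangular (char_matrix U a)"
  using assms by (auto simp: char_matrix_def upper_triangular_def)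

lemma mat_trace_eq_sum_eigenvalues:
  fixes M :: "real mat"
  assumes M: "M \<in> carrier_mat n n" and cp: "char_poly M = (\<Prod>a\<leftarrow>as. [:-a, 1:])"
  shows "mat_trace M = sum_list as"
proof -
  obtain U P Q where "schur_decomposition M as = (U,P,Q)"
    by (cases "schur_decomposition M as")
  from schur_decomposition[OF M cp this] show ?thesis
    by (metis similar_mat_wit_trace mat_trace_eq_sum_diag_mat)
qed

lemma index_char_matrix_mult_char_matrix:
  assumes M: "M \<in> carrier_mat n n" and pq: "p < n" "q < n"
  shows "(char_matrix M a * char_matrix M b) $$ (p,q)
    = (M * M) $$ (p,q) - (a + b) * M $$ (p,q) + (if p = q then a * b else 0)"
proof -
  have "(char_matrix M a * char_matrix M b) $$ (p,q)
      = (\<Sum>l<n. (M$$(p,l) - a * (if l = p then 1 else 0)) * (M$$(l,q) - b * (if l = q then 1 else 0)))"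
    using M pq by (simp add: char_matrix_def scalar_prod_def atLeast0LessThan)
  also have "\<dots> = (\<Sum>l<n. M$$(p,l) * M$$(l,q)) - (\<Sum>l<n. if l = q then b * M$$(p,l) else 0)
      - (\<Sum>l<n. if l = p then a * M$$(l,q) else 0) + (\<Sum>l<n. if l = p then (if p = q then a*b else 0) else 0)"
    unfolding sum_subtractf[symmetric] sum.distrib[symmetric]
    by (intro sum.cong refl) (auto simp: algebra_simps)
  also have "\<dots> = (M * M) $$ (p,q) - (a + b) * M $$ (p,q) + (if p = q then a * b else 0)"
    using M pq by (simp add: sum.delta scalar_prod_def atLeast0LessThan algebra_simps)
  finally show ?thesis .
qed

lemma symmetric_mat_trace_square_eq_0:
  fixes N :: "real mat"
  assumes N: "N \<in> carrier_mat n n"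
    and sym: "\<And>i j. i < n \<Longrightarrow> j < n \<Longrightarrow> N $$ (i,j) = N $$ (j,i)"
    and "mat_trace (N * N) = 0"
  shows "N = 0\<^sub>m n n"
proof -
  have "mat_trace (N * N) = (\<Sum>i<n. \<Sum>k<n. (N $$ (i,k))^2)"
    using N sym by (auto simp: mat_trace_def scalar_prod_def atLeast0LessThan power2_eq_square
        intro!: sum.cong)
  with assms(3) have "\<forall>i\<in>{..<n}. \<forall>k\<in>{..<n}. (N $$ (i,k))^2 = 0"
    by (simp add: sum_nonneg_eq_0_iff sum_nonneg)
  with N show ?thesis by (intro eq_matI) auto
qed

lemma symmetric_two_eigenvalues_annihilated:
  fixes M :: "real mat"
  assumes M: "M \<in> carrier_mat n n" and cp: "char_poly M = (\<Prod>e\<leftarrow>es. [:-e, 1:])"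
    and sym: "\<And>i j. i < n \<Longrightarrow> j < n \<Longrightarrow> M $$ (i,j) = M $$ (j,i)"
    and es: "set es \<subseteq> {a, b}"
  shows "char_matrix M a * char_matrix M b = 0\<^sub>m n n"
proof -
  obtain U P Q where "schur_decomposition M es = (U,P,Q)"
    by (cases "schur_decomposition M es")
  from schur_decomposition[OF M cp this] have wit: "similar_mat_wit M U P Q"
    and ut: "upper_triangular U" and diag: "diag_mat U = es" by auto
  have U: "U \<in> carrier_mat n n" using similar_mat_witD2[OF M wit] by auto
  define N where "N = char_matrix M a * char_matrix M b"
  define W where "W = char_matrix U a * char_matrix U b"
  have W: "W \<in> carrier_mat n n" "upper_triangular W"
    using U unfolding W_def by (auto intro!: upper_triangular_mult[of _ n]
        upper_triangular_char_matrix[OF U ut] mult_carrier_mat[of _ n n _ n])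
  have "W $$ (i,i) = 0" if "i < n" for i
  proof -
    have "U $$ (i,i) \<in> set es" using diag U that by (auto simp: diag_mat_def)
    hence "U $$ (i,i) \<in> {a, b}" using es by blast
    thus ?thesis
      using diag_mult_upper_triangular[OF char_matrix_closed[OF U] char_matrix_closed[OF U]
          upper_triangular_char_matrix[OF U ut]
          upper_triangular_char_matrix[OF U ut] that] U that
      by (auto simp: W_def char_matrix_def)
  qed
  hence "mat_trace (W * W) = 0"
    using W diag_mult_upper_triangular[OF W(1) W(1) W(2) W(2)] by (simp add: mat_trace_def)
  moreover have "similar_mat_wit (N * N) (W * W) P Q"
    unfolding N_def W_def by (intro similar_mat_wit_mult similar_mat_wit_char_matrix wit)
  ultimately have "mat_trace (N * N) = 0" by (simp add: similar_mat_wit_trace)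
  moreover have "N $$ (i,j) = N $$ (j,i)" if "i < n" "j < n" for i j
    using that sym M unfolding N_def index_char_matrix_mult_char_matrix[OF M that]
      index_char_matrix_mult_char_matrix[OF M that(2,1)]
    by (auto simp: scalar_prod_def atLeast0LessThan mult.commute intro!: sum.cong)
  moreover have "N \<in> carrier_mat n n"
    unfolding N_def by (rule mult_carrier_mat[OF char_matrix_closed[OF M] char_matrix_closed[OF M]])
  ultimately show ?thesis unfolding N_def by (intro symmetric_mat_trace_square_eq_0) auto
qed

section \<open>Rank-one updates\<close>

lemma det_rank_one_update:
  fixes U W :: "'a :: field mat"
  assumes U: "U \<in> carrier_mat n 1" and W: "W \<in> carrier_mat 1 n" and d: "d \<noteq> 0"
  shows "det (d \<cdot>\<^sub>m 1\<^sub>m n - U * W) * d = d ^ n * (d - (W * U) $$ (0,0))"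
proof -
  define c where "c = (W * U) $$ (0,0)"
  define L1 where "L1 = four_block_mat (d \<cdot>\<^sub>m 1\<^sub>m n - U * W) U (0\<^sub>m 1 n) (1\<^sub>m 1)"
  define R1 where "R1 = four_block_mat (1\<^sub>m n) (0\<^sub>m n 1) W (1\<^sub>m 1)"
  define L2 where "L2 = four_block_mat (1\<^sub>m n) (0\<^sub>m n 1) ((1/d) \<cdot>\<^sub>m W) (1\<^sub>m 1)"
  define R2 where "R2 = four_block_mat (d \<cdot>\<^sub>m 1\<^sub>m n) U (0\<^sub>m 1 n) (1\<^sub>m 1 - (1/d) \<cdot>\<^sub>m (W * U))"
  define T where "T = four_block_mat (d \<cdot>\<^sub>m 1\<^sub>m n) U W (1\<^sub>m 1)"
  have UW: "U * W \<in> carrier_mat n n" and WU: "W * U \<in> carrier_mat 1 1" using U W by auto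
  \<comment> \<open>two block factorisations of the bordered matrix \<open>T\<close>\<close>
  have "L1 * R1 = four_block_mat ((d \<cdot>\<^sub>m 1\<^sub>m n - U * W) * 1\<^sub>m n + U * W)
      ((d \<cdot>\<^sub>m 1\<^sub>m n - U * W) * 0\<^sub>m n 1 + U * 1\<^sub>m 1) (0\<^sub>m 1 n * 1\<^sub>m n + 1\<^sub>m 1 * W)
      (0\<^sub>m 1 n * 0\<^sub>m n 1 + 1\<^sub>m 1 * 1\<^sub>m 1)"
    unfolding L1_def R1_def by (rule mult_four_block_mat, insert U W, auto)
  also have "\<dots> = T" unfolding T_def
    by (intro arg_cong4[where f = four_block_mat] eq_matI, insert U W UW, auto)
  finally have LR1: "L1 * R1 = T" .
  have "L2 * R2 = four_block_mat (1\<^sub>m n * (d \<cdot>\<^sub>m 1\<^sub>m n) + 0\<^sub>m n 1 * 0\<^sub>m 1 n)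
      (1\<^sub>m n * U + 0\<^sub>m n 1 * (1\<^sub>m 1 - (1/d) \<cdot>\<^sub>m (W * U)))
      ((1/d) \<cdot>\<^sub>m W * (d \<cdot>\<^sub>m 1\<^sub>m n) + 1\<^sub>m 1 * 0\<^sub>m 1 n)
      ((1/d) \<cdot>\<^sub>m W * U + 1\<^sub>m 1 * (1\<^sub>m 1 - (1/d) \<cdot>\<^sub>m (W * U)))"
    unfolding L2_def R2_def by (rule mult_four_block_mat, insert U W WU, auto)
  also have "\<dots> = T" unfolding T_def
    by (intro arg_cong4[where f = four_block_mat] eq_matI, insert U W UW WU d, auto)
  finally have LR2: "L2 * R2 = T" .
  have carrier: "L1 \<in> carrier_mat (n+1) (n+1)" "R1 \<in> carrier_mat (n+1) (n+1)"
    "L2 \<in> carrier_mat (n+1) (n+1)" "R2 \<in> carrier_mat (n+1) (n+1)"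
    unfolding L1_def R1_def L2_def R2_def using U W by auto
  have "det L1 = det (d \<cdot>\<^sub>m 1\<^sub>m n - U * W)" unfolding L1_def
    by (subst det_four_block_mat_lower_left_zero[of _ n _ 1], insert U W UW, auto)
  moreover have "det R1 = 1" unfolding R1_def
    by (subst det_four_block_mat_upper_right_zero[of _ n _ 1], insert U W, auto)
  moreover have "det L2 = 1" unfolding L2_def
    by (subst det_four_block_mat_upper_right_zero[of _ n _ 1], insert U W, auto)
  moreover have "det R2 = d ^ n * (1 - c / d)"
  proof -
    have "1\<^sub>m 1 - (1/d) \<cdot>\<^sub>m (W * U) \<in> carrier_mat 1 1"
      using WU by (intro minus_carrier_mat smult_carrier_mat)
    hence "det (1\<^sub>m 1 - (1/d) \<cdot>\<^sub>m (W * U)) = 1 - c / d"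
      using carrier_matD[OF WU] unfolding c_def by (simp add: det_single)
    thus ?thesis unfolding R2_def
      by (subst det_four_block_mat_lower_left_zero[of _ n _ 1], insert U W WU, auto)
  qed
  ultimately have "det (d \<cdot>\<^sub>m 1\<^sub>m n - U * W) = d ^ n * (1 - c / d)"
    using det_mult[OF carrier(1,2)] det_mult[OF carrier(3,4)] LR1 LR2 by simp
  thus ?thesis using d unfolding c_def by (simp add: field_simps)
qed

lemma det_minus_rank_one:
  fixes K N U W :: "'a :: field mat"
  assumes K: "K \<in> carrier_mat n n" and N: "N \<in> carrier_mat n n"
    and U: "U \<in> carrier_mat n 1" and W: "W \<in> carrier_mat 1 n"
    and KN: "K * N = d \<cdot>\<^sub>m 1\<^sub>m n" and d: "d \<noteq> 0"
  shows "det (K - U * W) * d = det K * (d - (W * N * U) $$ (0,0))"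
proof -
  have "(K - U * W) * N = K * N - U * W * N"
    using K N U W by (intro minus_mult_distrib_mat) auto
  also have "U * W * N = U * (W * N)" using U W N by (rule assoc_mult_mat)
  finally have "(K - U * W) * N = d \<cdot>\<^sub>m 1\<^sub>m n - U * (W * N)" unfolding KN .
  moreover have "K - U * W \<in> carrier_mat n n" using K U W by auto
  moreover have "W * N * U = W * (N * U)" using W N U by (rule assoc_mult_mat)
  ultimately have factor: "det (K - U * W) * det N * d = d ^ n * (d - (W * N * U) $$ (0,0))"
    using det_mult[of "K - U * W" n N] det_rank_one_update[OF U _ d, of "W * N"] N W
    by (simp add: assoc_mult_mat[of W 1 n N n U 1])
  have det_KN: "det K * det N = d ^ n"
    using det_mult[OF K N] KN by simp
  with d have "det N \<noteq> 0" by auto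
  have "(det (K - U * W) * d) * det N = det (K - U * W) * det N * d" by (simp only: mult_ac)
  also have "\<dots> = (det K * (d - (W * N * U) $$ (0,0))) * det N"
    unfolding factor det_KN[symmetric] by (simp only: mult_ac)
  finally show ?thesis using \<open>det N \<noteq> 0\<close> by simp
qed

lemma bilinear_form_char_matrix:
  fixes M U W :: "'a :: field mat"
  assumes M: "M \<in> carrier_mat n n" and U: "U \<in> carrier_mat n 1" and W: "W \<in> carrier_mat 1 n"
  shows "(W * char_matrix M c * U) $$ (0,0) = (W * M * U) $$ (0,0) - c * (W * U) $$ (0,0)"
proof -
  have "W * ((-c) \<cdot>\<^sub>m 1\<^sub>m n) = (-c) \<cdot>\<^sub>m W"
    using mult_smult_distrib[OF W one_carrier_mat] W by simp
  hence "W * char_matrix M c = W * M + (-c) \<cdot>\<^sub>m W"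
    using M W by (simp add: char_matrix_def mult_add_distrib_mat[of W 1 n])
  hence "W * char_matrix M c * U = W * M * U + (-c) \<cdot>\<^sub>m (W * U)"
    using M U W by (simp add: add_mult_distrib_mat[of _ 1 n] mult_smult_assoc_mat[of W 1 n])
  thus ?thesis using U W by simp
qed

lemma char_matrix_quasi_inverse:
  assumes M: "M \<in> carrier_mat n n" and annihilated: "char_matrix M a * char_matrix M b = 0\<^sub>m n n"
  shows "- char_matrix M x * char_matrix M (a + b - x) = ((x - a) * (x - b)) \<cdot>\<^sub>m 1\<^sub>m n"
proof (rule eq_matI)
  fix p q assume "p < dim_row (((x - a) * (x - b)) \<cdot>\<^sub>m 1\<^sub>m n)" "q < dim_col (((x - a) * (x - b)) \<cdot>\<^sub>m 1\<^sub>m n)"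
  hence pq: "p < n" "q < n" by auto
  have MM: "(M * M) $$ (p,q) = (a + b) * M $$ (p,q) - (if p = q then a * b else 0)"
    using arg_cong[OF annihilated, of "\<lambda>X. X $$ (p,q)"] pq
    unfolding index_char_matrix_mult_char_matrix[OF M pq] by (simp add: algebra_simps)
  have "(- char_matrix M x * char_matrix M (a + b - x)) $$ (p,q)
      = - (char_matrix M x * char_matrix M (a + b - x)) $$ (p,q)"
    using pq uminus_mult_left_mat[of "char_matrix M x" "char_matrix M (a + b - x)"]
      carrier_matD[OF char_matrix_closed[OF M]] by simp
  also have "\<dots> = (((x - a) * (x - b)) \<cdot>\<^sub>m 1\<^sub>m n) $$ (p,q)"
    using pq unfolding index_char_matrix_mult_char_matrix[OF M pq] MM by (simp add: algebra_simps)
  finally show "(- char_matrix M x * char_matrix M (a + b - x)) $$ (p,q)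
    = (((x - a) * (x - b)) \<cdot>\<^sub>m 1\<^sub>m n) $$ (p,q)" .
qed (use carrier_matD[OF char_matrix_closed[OF M]] in auto)

lemma char_poly_rank_one_update:
  fixes M U W :: "'a :: field_char_0 mat"
  assumes M: "M \<in> carrier_mat n n" and U: "U \<in> carrier_mat n 1" and W: "W \<in> carrier_mat 1 n"
    and annihilated: "char_matrix M a * char_matrix M b = 0\<^sub>m n n"
    and cp: "char_poly M = [:-a, 1:] ^ Suc k * [:-b, 1:] ^ Suc l"
  defines "\<beta> \<equiv> (W * U) $$ (0,0)" and "\<gamma> \<equiv> (W * M * U) $$ (0,0)"
  shows "char_poly (M + U * W)
    = [:-a, 1:] ^ k * [:-b, 1:] ^ l * [:a * b + (a + b) * \<beta> - \<gamma>, - (a + b + \<beta>), 1:]"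
proof (rule poly_eqI_cofinite[of "{a, b}"])
  fix x assume "x \<notin> {a, b}"
  define d where "d = (x - a) * (x - b)"
  have "d \<noteq> 0" using \<open>x \<notin> {a, b}\<close> by (simp add: d_def)
  define K where "K = - char_matrix M x"
  define N where "N = char_matrix M (a + b - x)"
  have K: "K \<in> carrier_mat n n" and N: "N \<in> carrier_mat n n"
    using M by (simp_all add: K_def N_def)
  have "K * N = d \<cdot>\<^sub>m 1\<^sub>m n"
    unfolding K_def N_def d_def by (rule char_matrix_quasi_inverse[OF M annihilated])
  from det_minus_rank_one[OF K N U W this \<open>d \<noteq> 0\<close>]
  have "det (K - U * W) * d = det K * (d - \<gamma> + (a + b - x) * \<beta>)"
    unfolding N_def bilinear_form_char_matrix[OF M U W] \<beta>_def \<gamma>_def by (simp add: algebra_simps)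
  moreover have "det K = (x - a) ^ k * (x - b) ^ l * d"
  proof -
    have "det K = poly (char_poly M) x" by (simp add: K_def char_poly_matrix[OF M])
    also have "\<dots> = (x - a) ^ Suc k * (x - b) ^ Suc l" unfolding cp poly_mult poly_power by simp
    finally show ?thesis by (simp add: d_def mult_ac)
  qed
  moreover have "- char_matrix (M + U * W) x = K - U * W"
    using M U W by (intro eq_matI) (auto simp: K_def char_matrix_def)
  ultimately have "poly (char_poly (M + U * W)) x * d
      = ((x - a) ^ k * (x - b) ^ l * (d - \<gamma> + (a + b - x) * \<beta>)) * d"
    using char_poly_matrix[of "M + U * W" n x] M U W by (simp add: mult_ac)
  hence "poly (char_poly (M + U * W)) x = (x - a) ^ k * (x - b) ^ l * (d - \<gamma> + (a + b - x) * \<beta>)"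
    using \<open>d \<noteq> 0\<close> by simp
  thus "poly (char_poly (M + U * W)) x
    = poly ([:-a, 1:] ^ k * [:-b, 1:] ^ l * [:a * b + (a + b) * \<beta> - \<gamma>, - (a + b + \<beta>), 1:]) x"
    by (simp add: d_def algebra_simps)
qed simp

section \<open>Seidel and adjacency matrices of a graph\<close>

lemma sum_adj_eq_twice_num_edges:
  assumes sym: "\<forall>i j. E i j = E j i" and irrefl: "\<forall>i. \<not> E i i"
  shows "(\<Sum>i<v. \<Sum>j<v. if E i j then 1 else 0 :: real) = 2 * real (num_edges v E)"
proof -
  define P1 where "P1 = {(i,j). i < j \<and> j < v \<and> E i j}"
  define P2 where "P2 = {(i,j). j < i \<and> i < v \<and> E i j}"
  have fin: "finite P1" "finite P2" unfolding P1_def P2_def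
    by (rule finite_subset[of _ "{..<v} \<times> {..<v}"], auto)+
  have "(\<Sum>i<v. \<Sum>j<v. if E i j then 1 else 0 :: real)
      = (\<Sum>p\<in>{..<v} \<times> {..<v}. if E (fst p) (snd p) then 1 else 0)"
    by (simp add: sum.cartesian_product split_beta)
  also have "\<dots> = real (card {(i,j). i < v \<and> j < v \<and> E i j})"
    by (simp add: sum.If_cases Int_def) (intro arg_cong[where f = card] arg_cong[where f = real], auto)
  also have "{(i,j). i < v \<and> j < v \<and> E i j} = P1 \<union> P2"
    unfolding P1_def P2_def using irrefl by auto (metis nat_neq_iff)
  also have "card (P1 \<union> P2) = card P1 + card P2"
    by (rule card_Un_disjoint[OF fin]) (auto simp: P1_def P2_def)
  also have "card P2 = card P1"
    unfolding P1_def P2_def using sym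
    by (intro bij_betw_same_card[where f = "\<lambda>(i,j). (j,i)", symmetric] bij_betwI[where g = "\<lambda>(i,j). (j,i)"])
      auto
  finally show ?thesis unfolding num_edges_def P1_def by simp
qed

lemma seidel_mat_carrier [simp]: "seidel_mat v E \<in> carrier_mat v v"
  unfolding seidel_mat_def adj_mat_def by (intro minus_carrier_mat smult_carrier_mat) auto

lemma index_seidel_mat:
  "i < v \<Longrightarrow> j < v \<Longrightarrow>
    seidel_mat v E $$ (i,j) = 1 - (if i = j then 1 else 0) - 2 * (if E i j then 1 else 0)"
  by (simp add: seidel_mat_def adj_mat_def)

lemma adj_mat_carrier [simp]: "adj_mat v E \<in> carrier_mat v v"
  by (simp add: adj_mat_def)

text \<open>The matrix \<open>A - J/2 = -(S + I)/2\<close>; the Seidel eigenvalue \<open>-1 - 2\<sigma>\<close> becomes its eigenvalue \<open>\<sigma>\<close>.\<close>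

definition centered_adj_mat :: "nat \<Rightarrow> (nat \<Rightarrow> nat \<Rightarrow> bool) \<Rightarrow> real mat" where
  "centered_adj_mat v E = mat v v (\<lambda>(i,j). (if E i j then 1 else 0) - 1/2)"

lemma centered_adj_mat_carrier [simp]: "centered_adj_mat v E \<in> carrier_mat v v"
  by (simp add: centered_adj_mat_def)

lemma adj_mat_eq_centered_adj_mat_plus_rank_one:
  "adj_mat v E = centered_adj_mat v E + mat v 1 (\<lambda>_. 1) * mat 1 v (\<lambda>_. 1/2)"
  by (intro eq_matI) (simp_all add: adj_mat_def centered_adj_mat_def scalar_prod_def)

lemma char_poly_centered_adj_mat:
  "poly (char_poly (centered_adj_mat v E)) x = (-1/2) ^ v * poly (char_poly (seidel_mat v E)) (-1 - 2 * x)"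
proof -
  have "- char_matrix (centered_adj_mat v E) x = (-1/2) \<cdot>\<^sub>m (- char_matrix (seidel_mat v E) (-1 - 2 * x))"
    by (intro eq_matI) (auto simp: char_matrix_def centered_adj_mat_def seidel_mat_def adj_mat_def field_simps)
  thus ?thesis
    using carrier_matD[OF char_matrix_closed[OF seidel_mat_carrier]]
    by (simp add: char_poly_matrix[OF seidel_mat_carrier] char_poly_matrix[OF centered_adj_mat_carrier])
qed

lemma mat_trace_centered_adj_mat:
  "\<forall>i. \<not> E i i \<Longrightarrow> mat_trace (centered_adj_mat v E) = - real v / 2"
  by (simp add: mat_trace_def centered_adj_mat_def)

lemma centered_adj_mat_square_diag:
  assumes sym: "\<forall>i j. E i j = E j i" and i: "i < v"
  shows "(centered_adj_mat v E * centered_adj_mat v E) $$ (i,i) = real v / 4"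
proof -
  have "(centered_adj_mat v E * centered_adj_mat v E) $$ (i,i)
      = (\<Sum>l<v. centered_adj_mat v E $$ (i,l) * centered_adj_mat v E $$ (l,i))"
    using i carrier_matD[OF centered_adj_mat_carrier] by (simp add: scalar_prod_def atLeast0LessThan)
  also have "\<dots> = (\<Sum>l<v. 1/4)"
    using i sym by (intro sum.cong refl) (auto simp: centered_adj_mat_def)
  finally show ?thesis by simp
qed

lemma centered_adj_mat_bilinear_ones:
  assumes "\<forall>i j. E i j = E j i" and "\<forall>i. \<not> E i i"
  shows "(mat 1 v (\<lambda>_. 1/2) * centered_adj_mat v E * mat v 1 (\<lambda>_. 1)) $$ (0,0)
    = real (num_edges v E) - (real v)\<^sup>2 / 4"
proof -
  have "(mat 1 v (\<lambda>_. 1/2) * centered_adj_mat v E * mat v 1 (\<lambda>_. 1)) $$ (0,0)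
      = (\<Sum>j<v. \<Sum>i<v. ((if E i j then 1 else 0) - 1/2) / 2)"
    by (simp add: centered_adj_mat_def scalar_prod_def atLeast0LessThan sum_divide_distrib)
  also have "\<dots> = (\<Sum>i<v. \<Sum>j<v. if E i j then 1 else 0 :: real) / 2 - (real v)\<^sup>2 / 4"
    by (subst sum.swap) (simp add: sum_subtractf sum_divide_distrib[symmetric] power2_eq_square)
  finally show ?thesis using sum_adj_eq_twice_num_edges[OF assms] by simp
qed

section \<open>Regular two-graphs\<close>

lemma seidel_two_eigenvalues_char_poly:
  assumes sym: "\<forall>i j. E i j = E j i"
    and two_eigs: "{x. eigenvalue (seidel_mat v E) x} = {-1 - 2*\<sigma>, -1 - 2*\<tau>}" and "\<sigma> \<noteq> \<tau>"
  obtains k l where "Polynomial.order (-1 - 2*\<sigma>) (char_poly (seidel_mat v E)) = Suc k"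
    and "Polynomial.order (-1 - 2*\<tau>) (char_poly (seidel_mat v E)) = Suc l"
    and "char_poly (centered_adj_mat v E) = [:-\<sigma>, 1:] ^ Suc k * [:-\<tau>, 1:] ^ Suc l"
    and "Suc k + Suc l = v"
proof -
  have "seidel_mat v E $$ (i,j) = seidel_mat v E $$ (j,i)" if "i < v" "j < v" for i j
    using sym that by (simp add: index_seidel_mat)
  with symmetric_two_eigenvalues_char_poly[OF seidel_mat_carrier _ two_eigs] \<open>\<sigma> \<noteq> \<tau>\<close>
  obtain k l where cpS: "char_poly (seidel_mat v E)
      = [:- (-1 - 2*\<sigma>), 1:] ^ Suc k * [:- (-1 - 2*\<tau>), 1:] ^ Suc l" and v: "Suc k + Suc l = v"
    by auto
  have "poly (char_poly (centered_adj_mat v E)) x = (x - \<sigma>) ^ Suc k * (x - \<tau>) ^ Suc l" for x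
  proof -
    have "poly (char_poly (seidel_mat v E)) (-1 - 2 * x) = (-2 * (x - \<sigma>)) ^ Suc k * (-2 * (x - \<tau>)) ^ Suc l"
      unfolding cpS poly_mult poly_power by (simp add: algebra_simps)
    hence "poly (char_poly (centered_adj_mat v E)) x
        = (-1/2) ^ (Suc k + Suc l) * (-2 * (x - \<sigma>)) ^ Suc k * (-2 * (x - \<tau>)) ^ Suc l"
      unfolding char_poly_centered_adj_mat v by simp
    also have "\<dots> = ((-1/2) * (-2 * (x - \<sigma>))) ^ Suc k * ((-1/2) * (-2 * (x - \<tau>))) ^ Suc l"
      by (simp only: power_add power_mult_distrib mult_ac)
    also have "\<dots> = (x - \<sigma>) ^ Suc k * (x - \<tau>) ^ Suc l"
      by (simp only: mult_minus_left mult_minus_right minus_minus mult.assoc[symmetric]) simp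
    finally show ?thesis .
  qed
  hence "char_poly (centered_adj_mat v E) = [:-\<sigma>, 1:] ^ Suc k * [:-\<tau>, 1:] ^ Suc l"
    by (intro poly_eq_poly_eq_iff[THEN iffD1] ext) (simp add: algebra_simps)
  moreover have "-1 - 2*\<sigma> \<noteq> -1 - 2*\<tau>" using \<open>\<sigma> \<noteq> \<tau>\<close> by simp
  ultimately show ?thesis
    using that cpS v order_linear_power_mult[of "-1 - 2*\<sigma>" "-1 - 2*\<tau>"]
      order_linear_power_mult[of "-1 - 2*\<tau>" "-1 - 2*\<sigma>"] by (metis mult.commute)
qed

lemma centered_adj_mat_annihilated:
  assumes sym: "\<forall>i j. E i j = E j i"
    and cp: "char_poly (centered_adj_mat v E) = [:-\<sigma>, 1:] ^ k * [:-\<tau>, 1:] ^ l"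
  shows "char_matrix (centered_adj_mat v E) \<sigma> * char_matrix (centered_adj_mat v E) \<tau> = 0\<^sub>m v v"
proof (rule symmetric_two_eigenvalues_annihilated[OF centered_adj_mat_carrier])
  show "char_poly (centered_adj_mat v E) = (\<Prod>e\<leftarrow>replicate k \<sigma> @ replicate l \<tau>. [:-e, 1:])"
    using cp by (simp only: linear_factor_powers_eq_prod_list)
  show "centered_adj_mat v E $$ (i,j) = centered_adj_mat v E $$ (j,i)" if "i < v" "j < v" for i j
    using sym that by (simp add: centered_adj_mat_def)
qed auto

lemma centered_adj_mat_multiplicity_sum:
  assumes irrefl: "\<forall>i. \<not> E i i"
    and cp: "char_poly (centered_adj_mat v E) = [:-\<sigma>, 1:] ^ k * [:-\<tau>, 1:] ^ l"
  shows "real k * \<sigma> + real l * \<tau> = - real v / 2"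
proof -
  have "char_poly (centered_adj_mat v E) = (\<Prod>e\<leftarrow>replicate k \<sigma> @ replicate l \<tau>. [:-e, 1:])"
    using cp by (simp only: linear_factor_powers_eq_prod_list)
  from mat_trace_eq_sum_eigenvalues[OF centered_adj_mat_carrier this]
  show ?thesis using mat_trace_centered_adj_mat[of E v, OF irrefl] by (simp add: sum_list_replicate)
qed

lemma centered_adj_mat_eigenvalue_relation:
  assumes sym: "\<forall>i j. E i j = E j i" and irrefl: "\<forall>i. \<not> E i i" and "v > 0"
    and annihilated: "char_matrix (centered_adj_mat v E) \<sigma> * char_matrix (centered_adj_mat v E) \<tau> = 0\<^sub>m v v"
  shows "\<sigma> + \<tau> + real v / 2 = -2 * \<sigma> * \<tau>"
proof -
  have "\<sigma> * \<tau> + real v / 4 + (\<sigma> + \<tau>) / 2 = 0"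
    using arg_cong[OF annihilated, of "\<lambda>X. X $$ (0,0)"] \<open>v > 0\<close>
    unfolding index_char_matrix_mult_char_matrix[OF centered_adj_mat_carrier \<open>v > 0\<close> \<open>v > 0\<close>]
    centered_adj_mat_square_diag[OF sym \<open>v > 0\<close>]
    using irrefl by (simp add: centered_adj_mat_def algebra_simps)
  thus ?thesis by (simp add: field_simps)
qed

lemma multiplicity_square_sum:
  fixes \<sigma> \<tau> :: real
  assumes "real k * \<sigma> + real l * \<tau> = - real v / 2" and "\<sigma> + \<tau> + real v / 2 = -2 * \<sigma> * \<tau>"
    and "k + l = v"
  shows "real k * \<sigma>^2 + real l * \<tau>^2 = (real v)^2 / 4"
proof -
  have "real k * \<sigma>^2 + real l * \<tau>^2 = (\<sigma> + \<tau>) * (real k * \<sigma> + real l * \<tau>) - \<sigma> * \<tau> * real v"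
    unfolding \<open>k + l = v\<close>[symmetric] by (simp add: power2_eq_square algebra_simps)
  also have "\<sigma> * \<tau> = - (\<sigma> + \<tau> + real v / 2) / 2" using assms(2) by simp
  finally show ?thesis unfolding assms(1) by (simp add: power2_eq_square field_simps)
qed

lemma char_poly_adj_mat_two_eigenvalues:
  assumes sym: "\<forall>i j. E i j = E j i" and irrefl: "\<forall>i. \<not> E i i"
    and cp: "char_poly (centered_adj_mat v E) = [:-\<sigma>, 1:] ^ Suc k * [:-\<tau>, 1:] ^ Suc l"
  shows "char_poly (adj_mat v E) = [:-\<sigma>, 1:] ^ k * [:-\<tau>, 1:] ^ l
    * [:\<sigma> * \<tau> + (\<sigma> + \<tau>) * real v / 2 + (real v)\<^sup>2 / 4 - real (num_edges v E), - (\<sigma> + \<tau> + real v / 2), 1:]"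
proof -
  have ones: "(mat 1 v (\<lambda>_. 1/2) * mat v 1 (\<lambda>_. 1)) $$ (0,0) = real v / 2"
    by (simp add: scalar_prod_def)
  have "char_poly (adj_mat v E) = char_poly (centered_adj_mat v E + mat v 1 (\<lambda>_. 1) * mat 1 v (\<lambda>_. 1/2))"
    by (simp only: adj_mat_eq_centered_adj_mat_plus_rank_one)
  also have "\<dots> = [:-\<sigma>, 1:] ^ k * [:-\<tau>, 1:] ^ l
      * [:\<sigma> * \<tau> + (\<sigma> + \<tau>) * (real v / 2) - (real (num_edges v E) - (real v)\<^sup>2 / 4),
          - (\<sigma> + \<tau> + real v / 2), 1:]"
    using char_poly_rank_one_update[OF centered_adj_mat_carrier _ _ centered_adj_mat_annihilated[OF sym cp] cp,
        of "mat v 1 (\<lambda>_. 1)" "mat 1 v (\<lambda>_. 1/2)"]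
    unfolding ones centered_adj_mat_bilinear_ones[OF sym irrefl] by simp
  also have "\<dots> = [:-\<sigma>, 1:] ^ k * [:-\<tau>, 1:] ^ l
    * [:\<sigma> * \<tau> + (\<sigma> + \<tau>) * real v / 2 + (real v)\<^sup>2 / 4 - real (num_edges v E), - (\<sigma> + \<tau> + real v / 2), 1:]"
    by (rule arg_cong[where f = "\<lambda>q. [:-\<sigma>, 1:] ^ k * [:-\<tau>, 1:] ^ l * q"]) (simp add: algebra_simps)
  finally show ?thesis .
qed

lemma adj_mat_two_eigenvalues_spectrum:
  assumes sym: "\<forall>i j. E i j = E j i" and irrefl: "\<forall>i. \<not> E i i"
    and cp: "char_poly (centered_adj_mat v E) = [:-\<sigma>, 1:] ^ Suc k * [:-\<tau>, 1:] ^ Suc l"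
  obtains \<rho>1 \<rho>2
  where "char_poly (adj_mat v E) = [:-\<sigma>, 1:] ^ k * [:-\<tau>, 1:] ^ l * ([:-\<rho>1, 1:] * [:-\<rho>2, 1:])"
    and "\<rho>1 + \<rho>2 = \<sigma> + \<tau> + real v / 2"
    and "\<rho>1^2 + \<rho>2^2 = \<sigma>^2 + \<tau>^2 + 2 * real (num_edges v E) - (real v)^2 / 4"
proof -
  define q where "q = [:\<sigma> * \<tau> + (\<sigma> + \<tau>) * real v / 2 + (real v)\<^sup>2 / 4 - real (num_edges v E),
    - (\<sigma> + \<tau> + real v / 2), 1:]"
  have cpA: "char_poly (adj_mat v E) = [:-\<sigma>, 1:] ^ k * [:-\<tau>, 1:] ^ l * q"
    unfolding q_def by (rule char_poly_adj_mat_two_eigenvalues[OF sym irrefl cp])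
  have "adj_mat v E $$ (i,j) = adj_mat v E $$ (j,i)" if "i < v" "j < v" for i j
    using sym that by (simp add: adj_mat_def)
  moreover from cpA have "q dvd char_poly (adj_mat v E)" by simp
  ultimately obtain \<rho>1 \<rho>2 where \<rho>: "q = [:-\<rho>1, 1:] * [:-\<rho>2, 1:]"
    unfolding q_def by (rule symmetric_quadratic_factor_splits[OF adj_mat_carrier])
  hence sum: "\<rho>1 + \<rho>2 = \<sigma> + \<tau> + real v / 2"
    and prod: "\<rho>1 * \<rho>2 = \<sigma> * \<tau> + (\<sigma> + \<tau>) * real v / 2 + (real v)\<^sup>2 / 4 - real (num_edges v E)"
    by (simp_all add: q_def)
  have "\<rho>1^2 + \<rho>2^2 = (\<rho>1 + \<rho>2)^2 - 2 * (\<rho>1 * \<rho>2)" by (simp add: power2_eq_square algebra_simps)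
  also have "\<dots> = \<sigma>^2 + \<tau>^2 + 2 * real (num_edges v E) - (real v)^2 / 4"
    unfolding sum prod by (simp add: power2_eq_square algebra_simps)
  finally show ?thesis using that cpA \<rho> sum by blast
qed

theorem lemma4:
  fixes v :: nat and E :: "nat \<Rightarrow> nat \<Rightarrow> bool" and \<sigma> \<tau> :: real
    and m\<sigma> m\<tau> e :: nat
  assumes sym: "\<forall>i j. E i j = E j i"
    and irrefl: "\<forall>i. \<not> E i i"
    and two_eigs: "{x. eigenvalue (seidel_mat v E) x} = {-1 - 2*\<sigma>, -1 - 2*\<tau>}"
    and distinct: "\<sigma> \<noteq> \<tau>"
    and m\<sigma>: "m\<sigma> = Polynomial.order (-1 - 2*\<sigma>) (char_poly (seidel_mat v E))"
    and m\<tau>: "m\<tau> = Polynomial.order (-1 - 2*\<tau>) (char_poly (seidel_mat v E))"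
    and e: "e = num_edges v E"
  shows "\<exists>\<rho>1 \<rho>2 :: real.
     has_spectrum (adj_mat v E)
       ({#\<rho>1, \<rho>2#} + replicate_mset (m\<sigma> - 1) \<sigma> + replicate_mset (m\<tau> - 1) \<tau>)
     \<and> m\<sigma> + m\<tau> = v
     \<and> real m\<sigma> * \<sigma> + real m\<tau> * \<tau> = - real v / 2
     \<and> real m\<sigma> * \<sigma>^2 + real m\<tau> * \<tau>^2 = (real v)^2 / 4
     \<and> \<rho>1 + \<rho>2 = \<sigma> + \<tau> + real v / 2
     \<and> \<sigma> + \<tau> + real v / 2 = -2 * \<sigma> * \<tau>
     \<and> \<rho>1^2 + \<rho>2^2 = \<sigma>^2 + \<tau>^2 + 2 * real e - (real v)^2 / 4"
proof -
  obtain k l where mk: "m\<sigma> = Suc k" and ml: "m\<tau> = Suc l" and v: "Suc k + Suc l = v"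
    and cpM: "char_poly (centered_adj_mat v E) = [:-\<sigma>, 1:] ^ Suc k * [:-\<tau>, 1:] ^ Suc l"
    using seidel_two_eigenvalues_char_poly[OF sym two_eigs distinct] m\<sigma> m\<tau> by metis
  have sum: "real m\<sigma> * \<sigma> + real m\<tau> * \<tau> = - real v / 2"
    using centered_adj_mat_multiplicity_sum[OF irrefl cpM] mk ml by simp
  have rel: "\<sigma> + \<tau> + real v / 2 = -2 * \<sigma> * \<tau>"
    using centered_adj_mat_eigenvalue_relation[OF sym irrefl _ centered_adj_mat_annihilated[OF sym cpM]] v
    by simp
  obtain \<rho>1 \<rho>2 where cpA: "char_poly (adj_mat v E)
      = [:-\<sigma>, 1:] ^ k * [:-\<tau>, 1:] ^ l * ([:-\<rho>1, 1:] * [:-\<rho>2, 1:])"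
    and "\<rho>1 + \<rho>2 = \<sigma> + \<tau> + real v / 2"
    and "\<rho>1^2 + \<rho>2^2 = \<sigma>^2 + \<tau>^2 + 2 * real e - (real v)^2 / 4"
    using adj_mat_two_eigenvalues_spectrum[OF sym irrefl cpM] e by blast
  moreover have "has_spectrum (adj_mat v E)
      ({#\<rho>1, \<rho>2#} + replicate_mset (m\<sigma> - 1) \<sigma> + replicate_mset (m\<tau> - 1) \<tau>)"
    unfolding has_spectrum_def cpA mk ml by (simp add: mult_ac del: mult_pCons_left mult_pCons_right)
  moreover have "m\<sigma> + m\<tau> = v" using mk ml v by simp
  ultimately show ?thesis using sum rel multiplicity_square_sum[OF sum rel] by blast
qed

end
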